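(* Let $p$ be a prime, $K\in\{\mathbb Z_{(p)},\mathbb Z_p\}$, $F$ a field containing $K$, $G=\langle a\rangle\cong C_{p^2}$, $\Phi(x)=x^{p-1}+\dots+x+1$, and for $0\leq i\leq p-2$ let $X_i$ be the $KC_{p^2}$-submodule of $KC_{p^2}$ generated by $(a-1)\Phi(a^p)$ and $\Phi(a)+(a-1)^{i+1}$. Let $T_i:C_{p^2}\to\widehat{X_i}$ be the cocycle with $T_i(a)=p^{-2}\Phi(a)\Phi(a^p)+X_i$. Then $\mathrm{Crys}(C_{p^2};X_i;T_i)$ is torsion-free.
   Context: $FM=F\otimes_KM$, $\widehat M=FM/M$ with $g(x+M)=gx+M$; a $1$-cocycle is $T:G\to\widehat M$ with $T(gh)=gT(h)+T(g)$, determined for cyclic $G$ by $T(a)$ via $T(a^k)=(1+a+\dots+a^{k-1})T(a)$. $\mathrm{Crys}(G;M;T)=\{(g,x):g\in G,\ x\in FM,\ x+M=T(g)\}$ with $(g,x)(g',x')=(gg',g'x+x')$. *)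

theory Defs
  imports Complex_Main "HOL-Computational_Algebra.Primes"
begin

text \<open>The cyclic group C_N = <a> is represented by exponents k in {0..<N} (a^k).
  Elements of the group algebra R C_N are functions nat => R, with x j the
  coefficient of a^j, and x j = 0 for j >= N.\<close>

definition grp :: "nat \<Rightarrow> nat \<Rightarrow> nat \<Rightarrow> 'f::comm_ring_1" where
  "grp N k = (\<lambda>j. if j = k mod N then 1 else 0)"

definition conv :: "nat \<Rightarrow> (nat \<Rightarrow> 'f::comm_ring_1) \<Rightarrow> (nat \<Rightarrow> 'f) \<Rightarrow> nat \<Rightarrow> 'f" where
  "conv N x y = (\<lambda>j. if j < N then (\<Sum>k<N. x k * y ((j + N - k) mod N)) else 0)"

fun cpow :: "nat \<Rightarrow> (nat \<Rightarrow> 'f::comm_ring_1) \<Rightarrow> nat \<Rightarrow> nat \<Rightarrow> 'f" where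
  "cpow N x 0 = grp N 0"
| "cpow N x (Suc n) = conv N x (cpow N x n)"

definition act :: "nat \<Rightarrow> nat \<Rightarrow> (nat \<Rightarrow> 'f::comm_ring_1) \<Rightarrow> nat \<Rightarrow> 'f" where
  "act N k x = conv N (grp N k) x"

definition grp_alg :: "nat \<Rightarrow> 'f::comm_ring_1 set \<Rightarrow> (nat \<Rightarrow> 'f) set" where
  "grp_alg N K = {x. (\<forall>j. x j \<in> K) \<and> (\<forall>j\<ge>N. x j = 0)}"

definition gen_submodule :: "nat \<Rightarrow> 'f::comm_ring_1 set \<Rightarrow> (nat \<Rightarrow> 'f) \<Rightarrow> (nat \<Rightarrow> 'f) \<Rightarrow> (nat \<Rightarrow> 'f) set" where
  "gen_submodule N K u v =
     {(\<lambda>j. conv N r u j + conv N s v j) | r s. r \<in> grp_alg N K \<and> s \<in> grp_alg N K}"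

text \<open>FM = F \<otimes>_K M, realised as the F-linear span of M inside F C_N\<close>
definition F_span :: "(nat \<Rightarrow> 'f::field) set \<Rightarrow> (nat \<Rightarrow> 'f) set" where
  "F_span M = {x. \<exists>(n::nat) c m. (\<forall>i<n. m i \<in> M) \<and> x = (\<lambda>j. \<Sum>i<n. c i * m i j)}"

definition Phi_a :: "nat \<Rightarrow> nat \<Rightarrow> 'f::comm_ring_1" where
  "Phi_a p = (\<lambda>j. \<Sum>l<p. grp (p^2) l j)"

definition Phi_ap :: "nat \<Rightarrow> nat \<Rightarrow> 'f::comm_ring_1" where
  "Phi_ap p = (\<lambda>j. \<Sum>l<p. grp (p^2) (p * l) j)"

definition a_minus_1 :: "nat \<Rightarrow> nat \<Rightarrow> 'f::comm_ring_1" where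
  "a_minus_1 N = (\<lambda>j. grp N 1 j - grp N 0 j)"

definition X_mod :: "nat \<Rightarrow> 'f::comm_ring_1 set \<Rightarrow> nat \<Rightarrow> (nat \<Rightarrow> 'f) set" where
  "X_mod p K i = gen_submodule (p^2) K
      (conv (p^2) (a_minus_1 (p^2)) (Phi_ap p))
      (\<lambda>j. Phi_a p j + cpow (p^2) (a_minus_1 (p^2)) (i + 1) j)"

definition T_a :: "nat \<Rightarrow> nat \<Rightarrow> 'f::field" where
  "T_a p = (\<lambda>j. conv (p^2) (Phi_a p) (Phi_ap p) j / (of_nat p)^2)"

definition T_val :: "nat \<Rightarrow> nat \<Rightarrow> nat \<Rightarrow> 'f::field" where
  "T_val p k = (\<lambda>j. \<Sum>l<k. act (p^2) l (T_a p) j)"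

text \<open>Crys(C_N; M; T) where t k is a representative in FM of T(a^k)\<close>
definition crys :: "nat \<Rightarrow> (nat \<Rightarrow> 'f::field) set \<Rightarrow> (nat \<Rightarrow> nat \<Rightarrow> 'f) \<Rightarrow> (nat \<times> (nat \<Rightarrow> 'f)) set" where
  "crys N M t = {(k, x). k < N \<and> x \<in> F_span M \<and> (\<lambda>j. x j - t k j) \<in> M}"

definition crys_mult :: "nat \<Rightarrow> nat \<times> (nat \<Rightarrow> 'f::comm_ring_1) \<Rightarrow> nat \<times> (nat \<Rightarrow> 'f) \<Rightarrow> nat \<times> (nat \<Rightarrow> 'f)" where
  "crys_mult N e e' = ((fst e + fst e') mod N, (\<lambda>j. act N (fst e') (snd e) j + snd e' j))"

fun crys_pow :: "nat \<Rightarrow> nat \<times> (nat \<Rightarrow> 'f::comm_ring_1) \<Rightarrow> nat \<Rightarrow> nat \<times> (nat \<Rightarrow> 'f)" where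
  "crys_pow N e 0 = (0, (\<lambda>_. 0))"
| "crys_pow N e (Suc n) = crys_mult N (crys_pow N e n) e"

definition torsion_free_crys :: "nat \<Rightarrow> (nat \<times> (nat \<Rightarrow> 'f::comm_ring_1)) set \<Rightarrow> bool" where
  "torsion_free_crys N S \<longleftrightarrow>
     (\<forall>e\<in>S. \<forall>n>0. crys_pow N e n = (0, (\<lambda>_. 0)) \<longrightarrow> e = (0, (\<lambda>_. 0)))"

definition Zloc :: "nat \<Rightarrow> rat set" where
  "Zloc p = {q. \<not> int p dvd snd (quotient_of q)}"

definition padic_ints :: "nat \<Rightarrow> (nat \<Rightarrow> int) set" where
  "padic_ints p = {x. \<forall>n. 0 \<le> x n \<and> x n < int p ^ n \<and> x n = x (Suc n) mod int p ^ n}"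

definition padd :: "nat \<Rightarrow> (nat \<Rightarrow> int) \<Rightarrow> (nat \<Rightarrow> int) \<Rightarrow> nat \<Rightarrow> int" where
  "padd p x y = (\<lambda>n. (x n + y n) mod int p ^ n)"

definition pmult :: "nat \<Rightarrow> (nat \<Rightarrow> int) \<Rightarrow> (nat \<Rightarrow> int) \<Rightarrow> nat \<Rightarrow> int" where
  "pmult p x y = (\<lambda>n. (x n * y n) mod int p ^ n)"

definition pone :: "nat \<Rightarrow> nat \<Rightarrow> int" where
  "pone p = (\<lambda>n. 1 mod int p ^ n)"

definition padic_embedding :: "nat \<Rightarrow> ((nat \<Rightarrow> int) \<Rightarrow> 'f::field) \<Rightarrow> bool" where
  "padic_embedding p \<phi> \<longleftrightarrow> inj_on \<phi> (padic_ints p) \<and> \<phi> (pone p) = 1 \<and>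
     (\<forall>x\<in>padic_ints p. \<forall>y\<in>padic_ints p.
        \<phi> (padd p x y) = \<phi> x + \<phi> y \<and> \<phi> (pmult p x y) = \<phi> x * \<phi> y)"

end

theory Submission
  imports Defs "HOL-Computational_Algebra.Polynomial" "HOL-Number_Theory.Cong"
begin

(* Identify F C_{p^2} with F[x]/(x^{p^2} - 1) via a |-> x, so that an element (a^k, x) of
   Crys(C_{p^2}; X_i; T_i) has x = T_i(a^k) + r(a)(a - 1)Phi(a^p) + s(a)(Phi(a) + (a - 1)^{i+1})
   with r, s in K[x]. If its n-th power is trivial, then (1 + a^k + ... + a^{(n-1)k}) x = 0.
   The norm element Phi(a)Phi(a^p) absorbs every a^k, so multiplying by it leaves n times the
   augmentation of x, which is k + p s(1); as p is not invertible in K, k = p u with s(1) = -u.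
   If 0 < u < p, multiplying instead by Phi(a^p), which absorbs a^{pu}, gives Phi(a^p) x = 0;
   multiplying further by (a - 1)^{p-2-i}, using (a - 1)^{p-1} = Phi(a) - p h(a) with h integral,
   and reading off the coefficient of 1 gives u in pK, a contradiction. Hence k = 0, and then
   n x = 0 forces x = 0. *)

section \<open>The group algebra \<open>F C\<^sub>N\<close> as \<open>F[x]/(x\<^sup>N - 1)\<close>\<close>

definition poly_to_alg :: "nat \<Rightarrow> 'f::comm_ring_1 poly \<Rightarrow> nat \<Rightarrow> 'f" where
  "poly_to_alg N A = (\<lambda>j. \<Sum>k\<le>degree A. coeff A k * grp N k j)"

lemma poly_to_alg_eq_sum:
  assumes "degree A < D"
  shows "poly_to_alg N A j = (\<Sum>k<D. coeff A k * grp N k j)"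
proof -
  have "(\<Sum>k<D. coeff A k * grp N k j) = (\<Sum>k\<le>degree A. coeff A k * grp N k j)"
    by (rule sum.mono_neutral_right) (use assms in \<open>auto simp: coeff_eq_0\<close>)
  then show ?thesis by (simp add: poly_to_alg_def)
qed

lemma poly_to_alg_0 [simp]: "poly_to_alg N 0 j = 0"
  by (simp add: poly_to_alg_def)

lemma poly_to_alg_add: "poly_to_alg N (A + B) j = poly_to_alg N A j + poly_to_alg N B j"
proof -
  define D where "D = Suc (max (degree A) (degree B))"
  have "degree (A + B) < D" "degree A < D" "degree B < D"
    using degree_add_le_max[of A B] by (auto simp: D_def)
  then show ?thesis by (simp add: poly_to_alg_eq_sum[of _ D] algebra_simps sum.distrib)
qed

lemma poly_to_alg_diff: "poly_to_alg N (A - B) j = poly_to_alg N A j - poly_to_alg N B j"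
  using poly_to_alg_add[of N A "- B" j] by (simp add: poly_to_alg_def sum_negf)

lemma poly_to_alg_smult: "poly_to_alg N (smult c A) j = c * poly_to_alg N A j"
proof -
  have "degree (smult c A) < Suc (degree A)"
    using degree_smult_le[of c A] by simp
  then show ?thesis
    by (simp add: poly_to_alg_eq_sum[of _ "Suc (degree A)"] sum_distrib_left mult.assoc
        del: sum.lessThan_Suc)
qed

lemma poly_to_alg_of_nat_mult: "poly_to_alg N (of_nat n * A) j = of_nat n * poly_to_alg N A j"
  by (simp add: of_nat_poly poly_to_alg_smult)

lemma poly_to_alg_sum:
  "poly_to_alg N (\<Sum>i\<in>I. f i) j = (\<Sum>i\<in>I. poly_to_alg N (f i) j)"
  by (induction I rule: infinite_finite_induct) (simp_all add: poly_to_alg_add)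

lemma poly_to_alg_monom: "poly_to_alg N (monom c k) j = c * grp N k j"
proof -
  have "degree (monom c k) < Suc k"
    using degree_monom_le[of c k] by linarith
  then show ?thesis
    by (simp add: poly_to_alg_eq_sum coeff_monom if_distrib[of "\<lambda>x. x * _"] cong: if_cong
        del: sum.lessThan_Suc)
qed

lemma poly_to_alg_1: "poly_to_alg N 1 = grp N 0"
  by (rule ext) (use poly_to_alg_monom[of N 1 0] in \<open>simp add: one_pCons monom_0\<close>)

lemma poly_to_alg_eq_coeff:
  assumes "degree A < N" "j < N"
  shows "poly_to_alg N A j = coeff A j"
proof -
  have "poly_to_alg N A j = (\<Sum>k<N. coeff A k * grp N k j)"
    by (rule poly_to_alg_eq_sum[OF assms(1)])
  also have "\<dots> = (\<Sum>k<N. if k = j then coeff A k else 0)"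
    by (rule sum.cong) (use assms(2) in \<open>auto simp: grp_def\<close>)
  finally show ?thesis using assms(2) by simp
qed

lemma conv_sum_left:
  "finite I \<Longrightarrow> conv N (\<lambda>j. \<Sum>m\<in>I. f m j) y j' = (\<Sum>m\<in>I. conv N (f m) y j')"
  by (simp add: conv_def sum_distrib_right sum.swap[of _ I])

lemma conv_sum_right:
  "finite I \<Longrightarrow> conv N y (\<lambda>j. \<Sum>m\<in>I. f m j) j' = (\<Sum>m\<in>I. conv N y (f m) j')"
  by (simp add: conv_def sum_distrib_left sum.swap[of _ I])

lemma conv_scale_left: "conv N (\<lambda>j. c * x j) y j' = c * conv N x y j'"
  by (simp add: conv_def sum_distrib_left mult.assoc)

lemma conv_scale_right: "conv N y (\<lambda>j. c * x j) j' = c * conv N y x j'"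
  by (simp add: conv_def sum_distrib_left algebra_simps)

lemma conv_grp_left:
  assumes "N > 0" "j < N"
  shows "conv N (grp N m) y j = y ((j + N - m mod N) mod N)"
  using assms by (simp add: conv_def grp_def if_distrib[of "\<lambda>x. x * _"] sum.delta' cong: if_cong)

lemma conv_grp_grp:
  assumes "N > 0"
  shows "conv N (grp N m) (grp N l) = grp N (m + l)"
proof
  fix j
  show "conv N (grp N m) (grp N l) j = grp N (m + l) j"
  proof (cases "j < N")
    case True
    have "m mod N < N" using assms by simp
    then have "[j + N - m mod N = l] (mod N) \<longleftrightarrow> [j + N = l + m mod N] (mod N)"
      using cong_add_rcancel_nat[of "j + N - m mod N" "m mod N" l N] by simp
    also have "\<dots> \<longleftrightarrow> j = (m + l) mod N"
      using True by (simp add: cong_def mod_add_right_eq add.commute)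
    finally show ?thesis
      unfolding conv_grp_left[OF assms True] by (simp add: grp_def cong_def)
  next
    case False
    then show ?thesis using assms by (auto simp: conv_def grp_def)
  qed
qed

lemma conv_poly_to_alg:
  assumes "N > 0"
  shows "conv N (poly_to_alg N A) (poly_to_alg N B) = poly_to_alg N (A * B)"
proof
  fix j
  have "conv N (poly_to_alg N A) (poly_to_alg N B) j =
      (\<Sum>k\<le>degree A. \<Sum>l\<le>degree B. coeff A k * coeff B l * grp N (k + l) j)"
    unfolding poly_to_alg_def
    by (simp add: conv_sum_left conv_sum_right conv_scale_left conv_scale_right
        conv_grp_grp[OF assms] sum_distrib_left mult.assoc)
  also have "\<dots> = poly_to_alg N
      (\<Sum>k\<le>degree A. \<Sum>l\<le>degree B. monom (coeff A k * coeff B l) (k + l)) j"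
    by (simp add: poly_to_alg_sum poly_to_alg_monom)
  also have "(\<Sum>k\<le>degree A. \<Sum>l\<le>degree B. monom (coeff A k * coeff B l) (k + l)) = A * B"
  proof -
    have "A * B = (\<Sum>k\<le>degree A. monom (coeff A k) k) * (\<Sum>l\<le>degree B. monom (coeff B l) l)"
      by (simp add: poly_as_sum_of_monoms)
    then show ?thesis by (simp add: sum_product mult_monom)
  qed
  finally show "conv N (poly_to_alg N A) (poly_to_alg N B) j = poly_to_alg N (A * B) j" .
qed

lemma poly_to_alg_monom_minus_1:
  assumes "N > 0"
  shows "poly_to_alg N (monom 1 N - 1) = (\<lambda>_. 0)"
  using assms by (simp add: fun_eq_iff poly_to_alg_diff poly_to_alg_monom poly_to_alg_1 grp_def)

lemma degree_monom_minus_1: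
  assumes "N > 0"
  shows "degree (monom 1 N - 1 :: 'f::comm_ring_1 poly) = N"
proof -
  have "degree (monom 1 N + (- 1) :: 'f poly) = N"
    using assms by (subst degree_add_eq_left) (auto simp: degree_monom_eq)
  then show ?thesis by simp
qed

lemma poly_to_alg_eq_0_if_dvd:
  assumes "N > 0" "monom 1 N - 1 dvd A"
  shows "poly_to_alg N A = (\<lambda>_. 0)"
proof -
  obtain C where "A = (monom 1 N - 1) * C"
    using assms(2) ..
  then have "poly_to_alg N A = conv N (poly_to_alg N (monom 1 N - 1)) (poly_to_alg N C)"
    by (simp add: conv_poly_to_alg[OF assms(1)])
  also have "\<dots> = (\<lambda>_. 0)"
    by (simp add: poly_to_alg_monom_minus_1[OF assms(1)] conv_def fun_eq_iff)
  finally show ?thesis .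
qed

lemma poly_to_alg_eq_0_iff:
  fixes A :: "'f::field poly"
  assumes "N > 0"
  shows "poly_to_alg N A = (\<lambda>_. 0) \<longleftrightarrow> monom 1 N - 1 dvd A"
proof
  assume A0: "poly_to_alg N A = (\<lambda>_. 0)"
  define R where "R = A mod (monom 1 N - 1)"
  have "poly_to_alg N R = poly_to_alg N (A - (monom 1 N - 1) * (A div (monom 1 N - 1)))"
    by (simp add: R_def minus_mult_div_eq_mod)
  also have "\<dots> = (\<lambda>_. 0)"
    using A0 poly_to_alg_eq_0_if_dvd[OF assms, of "(monom 1 N - 1) * (A div (monom 1 N - 1))"]
    by (simp add: fun_eq_iff poly_to_alg_diff)
  finally have R0: "poly_to_alg N R = (\<lambda>_. 0)" .
  have "coeff R j = 0" for j
  proof (cases "R = 0")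
    case False
    then have "degree R < N"
      using degree_mod_less'[of "monom 1 N - 1" A] assms
      by (auto simp: R_def degree_monom_minus_1 monom_eq_1_iff)
    then show ?thesis
      using R0 poly_to_alg_eq_coeff[of R N j] by (cases "j < N") (auto simp: coeff_eq_0)
  qed simp
  then have "R = 0"
    by (simp add: poly_eq_iff)
  then show "monom 1 N - 1 dvd A"
    unfolding R_def by (rule mod_0_imp_dvd)
next
  assume "monom 1 N - 1 dvd A"
  then show "poly_to_alg N A = (\<lambda>_. 0)"
    by (rule poly_to_alg_eq_0_if_dvd[OF assms])
qed

lemma poly_to_alg_cong:
  fixes A B :: "'f::field poly"
  assumes "N > 0" "[A = B] (mod monom 1 N - 1)"
  shows "poly_to_alg N A = poly_to_alg N B"
  using assms poly_to_alg_eq_0_iff[OF assms(1), of "A - B"]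
  by (simp add: cong_iff_dvd_diff fun_eq_iff poly_to_alg_diff)

definition alg_to_poly :: "nat \<Rightarrow> (nat \<Rightarrow> 'f::comm_ring_1) \<Rightarrow> 'f poly" where
  "alg_to_poly N r = (\<Sum>j<N. monom (r j) j)"

lemma poly_to_alg_alg_to_poly:
  assumes "\<forall>j\<ge>N. r j = 0"
  shows "poly_to_alg N (alg_to_poly N r) = r"
proof
  fix j
  have "poly_to_alg N (alg_to_poly N r) j = (\<Sum>l<N. r l * grp N l j)"
    by (simp add: alg_to_poly_def poly_to_alg_sum poly_to_alg_monom)
  also have "\<dots> = (\<Sum>l<N. if l = j then r l else 0)"
    by (rule sum.cong) (auto simp: grp_def)
  finally show "poly_to_alg N (alg_to_poly N r) j = r j"
    using assms by (cases "j < N") auto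
qed

section \<open>Geometric sums\<close>

definition geom_sum :: "nat \<Rightarrow> nat \<Rightarrow> 'f::comm_ring_1 poly" where
  "geom_sum d m = (\<Sum>l<m. monom 1 (d * l))"

lemma geom_sum_0 [simp]: "geom_sum d 0 = 0"
  by (simp add: geom_sum_def)

lemma geom_sum_Suc: "geom_sum d (Suc m) = monom 1 d * geom_sum d m + 1"
proof -
  have "geom_sum d (Suc m) = monom 1 (d * 0) + (\<Sum>l<m. monom 1 (d * Suc l))"
    by (simp only: geom_sum_def sum.lessThan_Suc_shift)
  then show ?thesis
    by (simp add: geom_sum_def sum_distrib_left mult_monom one_pCons monom_0 add.commute)
qed

lemma monom_minus_1_mult_geom_sum: "(monom 1 d - 1) * geom_sum d m = monom 1 (d * m) - 1"
  by (induction m) (simp_all add: geom_sum_Suc algebra_simps mult_monom)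

lemma poly_geom_sum_1: "poly (geom_sum d m) 1 = of_nat m"
  by (simp add: geom_sum_def poly_sum poly_monom)

lemma geom_sum_1_mult_geom_sum: "geom_sum 1 d * geom_sum d m = (geom_sum 1 (d * m) :: 'f::idom poly)"
proof -
  have "(monom 1 1 - 1) * (geom_sum 1 d * geom_sum d m) = (monom 1 1 - 1) * (geom_sum 1 (d * m) :: 'f poly)"
    by (simp add: monom_minus_1_mult_geom_sum flip: mult.assoc)
  moreover have "degree (monom 1 1 - 1 :: 'f poly) = 1"
    by (rule degree_monom_minus_1) simp
  then have "monom 1 1 - 1 \<noteq> (0 :: 'f poly)"
    by auto
  ultimately show ?thesis by simp
qed

lemma poly_to_alg_geom_sum_1:
  assumes "N > 0"
  shows "poly_to_alg N (geom_sum 1 N) 0 = 1"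
proof -
  have "poly_to_alg N (geom_sum 1 N) 0 = (\<Sum>l<N. grp N l 0)"
    by (simp add: geom_sum_def poly_to_alg_sum poly_to_alg_monom)
  also have "\<dots> = (\<Sum>l<N. if l = 0 then 1 else 0)"
    by (rule sum.cong) (auto simp: grp_def)
  finally show ?thesis using assms by simp
qed

lemma monom_mult_cong_1: "[monom 1 (d * l) = 1] (mod (monom 1 d - 1 :: 'f::field poly))"
proof -
  have "monom 1 (d * l) - 1 = (monom 1 d - 1) * (geom_sum d l :: 'f poly)"
    by (simp add: monom_minus_1_mult_geom_sum)
  then show ?thesis by (simp add: cong_iff_dvd_diff)
qed

lemma geom_sum_cong_of_nat:
  "[geom_sum (d * e) m = of_nat m] (mod (monom 1 d - 1 :: 'f::field poly))"
proof -
  have "[geom_sum (d * e) m = (\<Sum>l<m. 1)] (mod (monom 1 d - 1 :: 'f poly))"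
    unfolding geom_sum_def mult.assoc by (intro cong_sum monom_mult_cong_1)
  then show ?thesis by simp
qed

lemma geom_sum_mult_cong:
  fixes A B :: "'f::field poly"
  assumes "[A = B] (mod monom 1 d - 1)"
  shows "[geom_sum d m * A = geom_sum d m * B] (mod monom 1 (d * m) - 1)"
proof -
  obtain C where C: "A - B = (monom 1 d - 1) * C"
    using assms by (auto simp: cong_iff_dvd_diff)
  have "geom_sum d m * A - geom_sum d m * B = ((monom 1 d - 1) * geom_sum d m) * C"
    by (metis C mult.assoc mult.commute right_diff_distrib)
  then have "geom_sum d m * A - geom_sum d m * B = (monom 1 (d * m) - 1) * C"
    by (simp only: monom_minus_1_mult_geom_sum)
  then show ?thesis by (simp add: cong_iff_dvd_diff)
qed

lemma cong_poly_1: "[A = [:poly A 1:]] (mod (monom 1 1 - 1 :: 'f::field poly))"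
proof -
  have "monom 1 1 - 1 = ([:- 1, 1:] :: 'f poly)"
    by (simp add: poly_eq_iff coeff_monom coeff_pCons split: nat.split)
  then show ?thesis by (simp add: cong_iff_dvd_diff poly_eq_0_iff_dvd flip: poly_eq_0_iff_dvd)
qed

lemma geom_sum_1_mult_cong:
  fixes A :: "'f::field poly"
  shows "[geom_sum 1 N * A = smult (poly A 1) (geom_sum 1 N)] (mod monom 1 N - 1)"
  using geom_sum_mult_cong[OF cong_poly_1[of A], of N] by (simp add: mult.commute)

lemma poly_to_alg_geom_sum_1_mult:
  fixes A :: "'f::field poly"
  assumes "N > 0"
  shows "poly_to_alg N (geom_sum 1 N * A) 0 = poly A 1"
proof -
  have "poly_to_alg N (geom_sum 1 N * A) = poly_to_alg N (smult (poly A 1) (geom_sum 1 N))"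
    by (rule poly_to_alg_cong[OF assms geom_sum_1_mult_cong])
  moreover have "poly_to_alg N (geom_sum 1 N :: 'f poly) 0 = 1"
    by (rule poly_to_alg_geom_sum_1[OF assms])
  ultimately show ?thesis
    by (simp add: poly_to_alg_smult)
qed

lemma geom_sum_mult_self_cong:
  "[A * (geom_sum d m * geom_sum d m) = of_nat m * (A * geom_sum d m)]
     (mod (monom 1 (d * m) - 1 :: 'f::field poly))"
  using cong_scalar_left[OF geom_sum_mult_cong[OF geom_sum_cong_of_nat[of d 1 m], of m], of A]
  by (simp add: mult_ac)

lemma dvd_geom_sum_mult_imp_dvd:
  fixes X :: "'f::field_char_0 poly"
  assumes "monom 1 (d * m) - 1 dvd geom_sum k n * X" "d dvd k" "n > 0"
  shows "monom 1 (d * m) - 1 dvd geom_sum d m * X"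
proof -
  obtain e where k: "k = d * e"
    using assms(2) ..
  have "[geom_sum d m * (geom_sum k n * X) = geom_sum d m * (of_nat n * X)] (mod monom 1 (d * m) - 1)"
    unfolding k by (intro geom_sum_mult_cong cong_mult geom_sum_cong_of_nat cong_refl)
  moreover have "monom 1 (d * m) - 1 dvd geom_sum d m * (geom_sum k n * X)"
    using assms(1) by (rule dvd_mult)
  ultimately have "monom 1 (d * m) - 1 dvd geom_sum d m * (of_nat n * X)"
    using cong_dvd_iff by blast
  then show ?thesis
    using assms(3) by (simp add: of_nat_poly dvd_smult_iff)
qed

lemma dvd_geom_sum_mult_imp_poly_1_eq_0:
  fixes X :: "'f::field_char_0 poly"
  assumes "monom 1 N - 1 dvd geom_sum k n * X" "N > 0" "n > 0"
  shows "poly X 1 = 0"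
proof -
  have "monom 1 N - 1 dvd geom_sum 1 N * X"
    using dvd_geom_sum_mult_imp_dvd[of 1 N k n X] assms by simp
  then have "poly_to_alg N (geom_sum 1 N * X) = (\<lambda>_. 0)"
    by (rule poly_to_alg_eq_0_if_dvd[OF assms(2)])
  then show ?thesis
    using poly_to_alg_geom_sum_1_mult[OF assms(2), of X] by simp
qed

lemma prime_choose_pred_cong:
  assumes "prime p" "l < p"
  shows "[int ((p - 1) choose l) = (- 1) ^ l] (mod int p)"
  using assms(2)
proof (induction l)
  case (Suc l)
  have "p choose Suc l = ((p - 1) choose l) + ((p - 1) choose Suc l)"
    using binomial_Suc_Suc[of "p - 1" l] assms(1) by (simp add: prime_gt_0_nat)
  moreover have "p dvd (p choose Suc l)"
    using dvd_choose_prime[OF Suc.prems _ _ assms(1)] assms(1) by auto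
  ultimately have sum_0: "[int ((p - 1) choose l) + int ((p - 1) choose Suc l) = 0] (mod int p)"
    by (simp add: cong_0_iff flip: of_nat_add)
  have "[int ((p - 1) choose l) + int ((p - 1) choose Suc l)
      = (- 1) ^ l + int ((p - 1) choose Suc l)] (mod int p)"
    using Suc by (simp add: cong_add_rcancel)
  from cong_trans[OF cong_sym[OF this] sum_0]
  have "[(- 1) ^ l + int ((p - 1) choose Suc l) = 0] (mod int p)" .
  then show ?case
    by (simp add: cong_iff_dvd_diff add.commute)
qed simp

lemma prime_choose_pred_sign_cong:
  assumes "prime p" "l < p"
  shows "[int ((p - 1) choose l) * (- 1) ^ (p - 1 - l) = 1] (mod int p)"
proof -
  have "[int ((p - 1) choose l) * (- 1) ^ (p - 1 - l) = (- 1) ^ l * (- 1) ^ (p - 1 - l)] (mod int p)"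
    by (intro cong_mult prime_choose_pred_cong[OF assms] cong_refl)
  also have "(- 1) ^ l * (- 1) ^ (p - 1 - l) = ((- 1) ^ (p - 1) :: int)"
    using assms(2) by (simp flip: power_add)
  also have "[(- 1) ^ (p - 1) = 1] (mod int p)"
  proof (cases "p = 2")
    case False
    then have "p > 2"
      using prime_ge_2_nat[OF assms(1)] by linarith
    then have "odd p"
      by (rule prime_odd_nat[OF assms(1)])
    then have "even (p - 1)"
      using \<open>p > 2\<close> by presburger
    then show ?thesis by simp
  qed (simp add: cong_def)
  finally show ?thesis .
qed

lemma x_minus_1_pow_pred_prime:
  assumes "prime p"
  obtains h :: "'f::comm_ring_1 poly"
  where "\<forall>l. coeff h l \<in> \<int>" "(monom 1 1 - 1) ^ (p - 1) = geom_sum 1 p - of_nat p * h"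
proof -
  define b where "b l = int ((p - 1) choose l) * (- 1) ^ (p - 1 - l)" for l
  define c where "c l = (1 - b l) div int p" for l
  define h :: "'f poly" where "h = (\<Sum>l<p. monom (of_int (c l)) l)"
  have b_eq: "b l = 1 - int p * c l" if "l < p" for l
  proof -
    have "int p dvd 1 - b l"
      using prime_choose_pred_sign_cong[OF assms that]
      by (simp add: b_def cong_iff_dvd_diff dvd_diff_commute)
    then show ?thesis by (simp add: c_def)
  qed
  have "\<forall>l. coeff h l \<in> \<int>"
    by (simp add: h_def coeff_sum coeff_monom)
  moreover have "(monom 1 1 - 1) ^ (p - 1) = geom_sum 1 p - of_nat p * h"
  proof -
    have p1: "{..p - 1} = {..<p}"
      using prime_gt_0_nat[OF assms] by auto
    have neg1_pow: "(- 1 :: 'f poly) ^ m = [:(- 1) ^ m:]" for m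
      by (induction m) simp_all
    have "(monom 1 1 - 1 :: 'f poly) ^ (p - 1) = (monom 1 1 + (- 1)) ^ (p - 1)"
      by simp
    also have "\<dots> = (\<Sum>l<p. of_nat ((p - 1) choose l) * (monom 1 1) ^ l * (- 1) ^ (p - 1 - l))"
      unfolding binomial_ring p1 ..
    also have "\<dots> = (\<Sum>l<p. monom (of_int (b l)) l)"
      by (rule sum.cong) (simp_all add: b_def monom_power of_nat_poly neg1_pow smult_monom mult.commute)
    also have "\<dots> = (\<Sum>l<p. monom 1 l - of_nat p * monom (of_int (c l)) l)"
      by (rule sum.cong) (simp_all add: b_eq of_nat_poly smult_monom diff_monom)
    also have "\<dots> = geom_sum 1 p - of_nat p * h"
      by (simp add: geom_sum_def h_def sum_subtractf sum_distrib_left)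
    finally show ?thesis .
  qed
  ultimately show thesis
    by (rule that)
qed

section \<open>Subrings in which \<open>p\<close> is not invertible\<close>

definition poly_over :: "'a set \<Rightarrow> 'a::zero poly \<Rightarrow> bool" where
  "poly_over K A \<longleftrightarrow> (\<forall>i. coeff A i \<in> K)"

text \<open>The only property of \<open>\<int>\<^sub>(\<^sub>p\<^sub>)\<close> and \<open>\<int>\<^sub>p\<close> that matters: they are subrings of \<open>F\<close>
  in which \<open>p\<close> is not invertible.\<close>

locale p_integral_subring =
  fixes p :: nat and K :: "'f::field_char_0 set"
  assumes one_mem: "1 \<in> K"
    and add_mem: "a \<in> K \<Longrightarrow> b \<in> K \<Longrightarrow> a + b \<in> K"
    and mult_mem: "a \<in> K \<Longrightarrow> b \<in> K \<Longrightarrow> a * b \<in> K"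
    and uminus_mem: "a \<in> K \<Longrightarrow> - a \<in> K"
    and p_dvd_of_nat_eq: "\<kappa> \<in> K \<Longrightarrow> of_nat c = of_nat p * \<kappa> \<Longrightarrow> p dvd c"
begin

lemma diff_mem: "a \<in> K \<Longrightarrow> b \<in> K \<Longrightarrow> a - b \<in> K"
  using add_mem[of a "- b"] uminus_mem[of b] by simp

lemma zero_mem: "0 \<in> K"
  using diff_mem[OF one_mem one_mem] by simp

lemma sum_mem: "(\<And>i. i \<in> I \<Longrightarrow> f i \<in> K) \<Longrightarrow> (\<Sum>i\<in>I. f i) \<in> K"
  by (induction I rule: infinite_finite_induct) (auto simp: zero_mem add_mem)

lemma Ints_mem: "z \<in> \<int> \<Longrightarrow> z \<in> K"
proof -
  have of_nat_mem: "of_nat n \<in> K" for n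
    by (induction n) (auto simp: zero_mem one_mem add_mem)
  show "z \<in> \<int> \<Longrightarrow> z \<in> K"
    by (elim Ints_cases) (metis of_nat_mem uminus_mem of_int_of_nat)
qed

lemma poly_over_sum: "(\<And>i. i \<in> I \<Longrightarrow> poly_over K (f i)) \<Longrightarrow> poly_over K (\<Sum>i\<in>I. f i)"
  by (simp add: poly_over_def coeff_sum sum_mem)

lemma poly_over_monom: "c \<in> K \<Longrightarrow> poly_over K (monom c n)"
  by (simp add: poly_over_def coeff_monom zero_mem)

lemma poly_over_1: "poly_over K 1"
  using poly_over_monom[OF one_mem, of 0] by (simp add: monom_0 one_pCons)

lemma poly_over_diff: "poly_over K A \<Longrightarrow> poly_over K B \<Longrightarrow> poly_over K (A - B)"
  by (simp add: poly_over_def diff_mem)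

lemma poly_over_mult: "poly_over K A \<Longrightarrow> poly_over K B \<Longrightarrow> poly_over K (A * B)"
  by (simp add: poly_over_def coeff_mult sum_mem mult_mem)

lemma poly_over_power: "poly_over K A \<Longrightarrow> poly_over K (A ^ n)"
  by (induction n) (simp_all add: poly_over_1 poly_over_mult)

lemma poly_over_geom_sum: "poly_over K (geom_sum d m)"
  unfolding geom_sum_def by (intro poly_over_sum poly_over_monom one_mem)

lemma poly_over_x_minus_1: "poly_over K (monom 1 1 - 1)"
  by (intro poly_over_diff poly_over_monom poly_over_1 one_mem)

lemma poly_over_Ints: "\<forall>i. coeff A i \<in> \<int> \<Longrightarrow> poly_over K A"
  by (simp add: poly_over_def Ints_mem)

lemma poly_1_mem: "poly_over K A \<Longrightarrow> poly A 1 \<in> K"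
  by (simp add: poly_over_def poly_altdef sum_mem)

lemma poly_to_alg_mem: "poly_over K A \<Longrightarrow> poly_to_alg N A j \<in> K"
  unfolding poly_to_alg_def poly_over_def
  by (intro sum_mem mult_mem) (auto simp: grp_def zero_mem one_mem)

end

section \<open>Torsion elements of the crystallographic group\<close>

text \<open>\<open>cocycle_poly p k\<close> and \<open>crys_poly p i k R S\<close> represent \<open>T\<^sub>i(a\<^sup>k)\<close> and
  \<open>T\<^sub>i(a\<^sup>k) + R(a) (a - 1) \<Phi>(a\<^sup>p) + S(a) (\<Phi>(a) + (a - 1)\<^sup>i\<^sup>+\<^sup>1)\<close>.\<close>

definition cocycle_poly :: "nat \<Rightarrow> nat \<Rightarrow> 'f::field poly" where
  "cocycle_poly p k = smult (1 / of_nat (p\<^sup>2)) (geom_sum 1 k * geom_sum 1 (p\<^sup>2))"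

definition crys_poly :: "nat \<Rightarrow> nat \<Rightarrow> nat \<Rightarrow> 'f poly \<Rightarrow> 'f poly \<Rightarrow> 'f::field poly" where
  "crys_poly p i k R S = cocycle_poly p k + R * ((monom 1 1 - 1) * geom_sum p p)
     + S * (geom_sum 1 p + (monom 1 1 - 1) ^ (i + 1))"

lemma poly_crys_poly_1:
  assumes "p > 0"
  shows "poly (crys_poly p i k R S :: 'f::field_char_0 poly) 1 = of_nat k + of_nat p * poly S 1"
  using assms by (simp add: crys_poly_def cocycle_poly_def poly_geom_sum_1 poly_monom)

lemma (in p_integral_subring) poly_crys_poly_1_eq_0E:
  assumes "p > 0" "poly_over K S" "poly (crys_poly p i k R S) 1 = 0"
  obtains u where "k = p * u" "poly S 1 = - of_nat u"
proof -
  have k_eq: "of_nat k = of_nat p * (- poly S 1)"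
    using assms(3) poly_crys_poly_1[OF assms(1), of i k R S] by (simp add: eq_neg_iff_add_eq_0)
  then obtain u where u: "k = p * u"
    using p_dvd_of_nat_eq[OF uminus_mem[OF poly_1_mem[OF assms(2)]]] by blast
  have "of_nat p * (of_nat u + poly S 1) = (0 :: 'f)"
    using k_eq u by (simp add: algebra_simps)
  then have "poly S 1 = - of_nat u"
    using assms(1) by (simp add: eq_neg_iff_add_eq_0 add.commute)
  with u show thesis
    by (rule that)
qed

lemma x_minus_1_pow_mult_crys_poly:
  fixes R S h :: "'f::field poly"
  assumes "j + (i + 1) = p - 1"
    and h: "(monom 1 1 - 1) ^ (p - 1) = geom_sum 1 p - of_nat p * h"
  shows "(monom 1 1 - 1) ^ j * (geom_sum p p * crys_poly p i (p * u) R S)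
    = smult (1 / of_nat (p\<^sup>2))
        (geom_sum 1 (p\<^sup>2) * ((monom 1 1 - 1) ^ j * geom_sum p p * geom_sum 1 (p * u)))
      + (monom 1 1 - 1) ^ (j + 1) * R * (geom_sum p p * geom_sum p p)
      + geom_sum 1 (p\<^sup>2) * ((monom 1 1 - 1) ^ j * S)
      + (geom_sum 1 (p\<^sup>2) * S - of_nat p * (S * geom_sum p p * h))"
proof -
  define Y :: "'f poly" where "Y = monom 1 1 - 1"
  define \<Phi>p :: "'f poly" where "\<Phi>p = geom_sum p p"
  have norm: "geom_sum 1 p * \<Phi>p = geom_sum 1 (p\<^sup>2)"
    unfolding \<Phi>p_def power2_eq_square by (rule geom_sum_1_mult_geom_sum)
  have Y_pow: "Y ^ j * Y ^ (i + 1) = geom_sum 1 p - of_nat p * h"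
    unfolding power_add[symmetric] assms(1) Y_def by (rule h)
  have "Y ^ j * (\<Phi>p * crys_poly p i (p * u) R S)
      = smult (1 / of_nat (p\<^sup>2)) (geom_sum 1 (p\<^sup>2) * (Y ^ j * \<Phi>p * geom_sum 1 (p * u)))
        + Y ^ (j + 1) * R * (\<Phi>p * \<Phi>p) + (geom_sum 1 p * \<Phi>p) * (Y ^ j * S)
        + S * \<Phi>p * (Y ^ j * Y ^ (i + 1))"
    by (simp add: crys_poly_def cocycle_poly_def Y_def \<Phi>p_def algebra_simps)
  also have "S * \<Phi>p * (Y ^ j * Y ^ (i + 1)) = geom_sum 1 (p\<^sup>2) * S - of_nat p * (S * \<Phi>p * h)"
    unfolding Y_pow norm[symmetric] by (simp add: algebra_simps)
  finally show ?thesis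
    unfolding norm unfolding Y_def \<Phi>p_def .
qed

text \<open>Multiplying by \<open>(a - 1)\<^sup>p\<^sup>-\<^sup>2\<^sup>-\<^sup>i \<Phi>(a\<^sup>p)\<close> and taking the coefficient of \<open>1 = a\<^sup>0\<close>:
  the relation \<open>(a - 1)\<^sup>p\<^sup>-\<^sup>1 = \<Phi>(a) - p h(a)\<close> isolates \<open>S(1)\<close> modulo \<open>p\<close>.\<close>

lemma poly_to_alg_0_mult_crys_poly:
  fixes R S h :: "'f::field_char_0 poly"
  assumes "p > 0" "j + (i + 1) = p - 1"
    and h: "(monom 1 1 - 1) ^ (p - 1) = geom_sum 1 p - of_nat p * h"
  shows "poly_to_alg (p\<^sup>2) ((monom 1 1 - 1) ^ j * (geom_sum p p * crys_poly p i (p * u) R S)) 0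
    = 0 ^ j * (of_nat u + poly S 1) + poly S 1
      + of_nat p * (poly_to_alg (p\<^sup>2) ((monom 1 1 - 1) ^ (j + 1) * R * geom_sum p p) 0
                    - poly_to_alg (p\<^sup>2) (S * geom_sum p p * h) 0)"
proof -
  define N where "N = p\<^sup>2"
  define Y :: "'f poly" where "Y = monom 1 1 - 1"
  define \<Phi>p :: "'f poly" where "\<Phi>p = geom_sum p p"
  have N: "N > 0" "N = p * p"
    using assms(1) by (simp_all add: N_def power2_eq_square)
  have \<Phi>p_square: "[Y ^ (j + 1) * R * (\<Phi>p * \<Phi>p) = of_nat p * (Y ^ (j + 1) * R * \<Phi>p)]
      (mod monom 1 N - 1)"
    unfolding N(2) \<Phi>p_def by (rule geom_sum_mult_self_cong)
  have "poly_to_alg N (Y ^ j * (\<Phi>p * crys_poly p i (p * u) R S)) 0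
      = 1 / of_nat N * poly (Y ^ j * \<Phi>p * geom_sum 1 (p * u)) 1
        + of_nat p * poly_to_alg N (Y ^ (j + 1) * R * \<Phi>p) 0 + poly (Y ^ j * S) 1
        + (poly S 1 - of_nat p * poly_to_alg N (S * \<Phi>p * h) 0)"
    unfolding x_minus_1_pow_mult_crys_poly[OF assms(2) h, folded Y_def \<Phi>p_def N_def]
      poly_to_alg_add poly_to_alg_diff poly_to_alg_smult poly_to_alg_of_nat_mult
      poly_to_alg_geom_sum_1_mult[OF N(1)] poly_to_alg_cong[OF N(1) \<Phi>p_square] ..
  also have "\<dots> = 0 ^ j * (of_nat u + poly S 1) + poly S 1
      + of_nat p * (poly_to_alg N (Y ^ (j + 1) * R * \<Phi>p) 0 - poly_to_alg N (S * \<Phi>p * h) 0)"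
  proof -
    have "poly Y 1 = 0"
      by (simp add: Y_def poly_monom)
    then show ?thesis
      using N by (simp add: \<Phi>p_def poly_geom_sum_1 algebra_simps)
  qed
  finally show ?thesis
    unfolding N_def Y_def \<Phi>p_def .
qed

lemma (in p_integral_subring) p_dvd_if_dvd_geom_sum_p_mult_crys_poly:
  assumes "prime p" "i \<le> p - 2" "poly_over K R" "poly_over K S" "poly S 1 = - of_nat u"
    and "monom 1 (p\<^sup>2) - 1 dvd geom_sum p p * crys_poly p i (p * u) R S"
  shows "p dvd u"
proof -
  obtain h :: "'f poly"
    where h_Ints: "\<forall>l. coeff h l \<in> \<int>" and h: "(monom 1 1 - 1) ^ (p - 1) = geom_sum 1 p - of_nat p * h"
    using x_minus_1_pow_pred_prime[OF assms(1)] by blast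
  define j where "j = p - 2 - i"
  have p: "p > 0" "j + (i + 1) = p - 1"
    using prime_ge_2_nat[OF assms(1)] assms(2) by (auto simp: j_def)
  define w where "w = poly_to_alg (p\<^sup>2) ((monom 1 1 - 1) ^ (j + 1) * R * geom_sum p p) 0
    - poly_to_alg (p\<^sup>2) (S * geom_sum p p * h) 0"
  have "poly_to_alg (p\<^sup>2) ((monom 1 1 - 1) ^ j * (geom_sum p p * crys_poly p i (p * u) R S)) = (\<lambda>_. 0)"
    using poly_to_alg_eq_0_if_dvd[OF _ dvd_mult[OF assms(6)]] p(1) by simp
  then have "of_nat u = of_nat p * w"
    using poly_to_alg_0_mult_crys_poly[OF p h, of u R S] assms(5) by (simp add: w_def algebra_simps)
  moreover have "w \<in> K"
    unfolding w_def using assms(3,4) h_Ints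
    by (intro diff_mem poly_to_alg_mem poly_over_mult poly_over_power poly_over_x_minus_1
        poly_over_geom_sum poly_over_Ints[OF h_Ints])
  ultimately show "p dvd u"
    using p_dvd_of_nat_eq by blast
qed

lemma (in p_integral_subring) eq_0_if_dvd_geom_sum_mult_crys_poly:
  assumes "prime p" "i \<le> p - 2" "k < p\<^sup>2" "poly_over K R" "poly_over K S" "n > 0"
    and "monom 1 (p\<^sup>2) - 1 dvd geom_sum k n * crys_poly p i k R S"
  shows "k = 0"
proof (rule ccontr)
  assume "k \<noteq> 0"
  have p: "p > 0" "p\<^sup>2 = p * p"
    using prime_gt_0_nat[OF assms(1)] by (simp_all add: power2_eq_square)
  have "poly (crys_poly p i k R S) 1 = 0"
    using dvd_geom_sum_mult_imp_poly_1_eq_0[OF assms(7)] p assms(6) by simp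
  then obtain u where k: "k = p * u" and S_1: "poly S 1 = - of_nat u"
    using poly_crys_poly_1_eq_0E[OF p(1) assms(5)] by blast
  have "monom 1 (p\<^sup>2) - 1 dvd geom_sum p p * crys_poly p i (p * u) R S"
    using dvd_geom_sum_mult_imp_dvd[of p p k n] assms(6,7) k p(2) by simp
  then have "p dvd u"
    by (rule p_dvd_if_dvd_geom_sum_p_mult_crys_poly[OF assms(1,2,4,5) S_1])
  moreover have "0 < u" "u < p"
    using \<open>k \<noteq> 0\<close> assms(3) k p(2) by auto
  ultimately show False
    by (auto dest: dvd_imp_le)
qed

lemma grp_eq_poly_to_alg: "grp N k = poly_to_alg N (monom 1 k)"
  by (rule ext) (simp add: poly_to_alg_monom)

lemma a_minus_1_eq_poly_to_alg: "a_minus_1 N = poly_to_alg N (monom 1 1 - 1)"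
  by (rule ext) (simp add: a_minus_1_def poly_to_alg_diff poly_to_alg_monom poly_to_alg_1)

lemma Phi_a_eq_poly_to_alg: "Phi_a p = poly_to_alg (p\<^sup>2) (geom_sum 1 p)"
  by (rule ext) (simp add: Phi_a_def geom_sum_def poly_to_alg_sum poly_to_alg_monom)

lemma Phi_ap_eq_poly_to_alg: "Phi_ap p = poly_to_alg (p\<^sup>2) (geom_sum p p)"
  by (rule ext) (simp add: Phi_ap_def geom_sum_def poly_to_alg_sum poly_to_alg_monom)

lemma cpow_poly_to_alg: "N > 0 \<Longrightarrow> cpow N (poly_to_alg N A) n = poly_to_alg N (A ^ n)"
  by (induction n) (simp_all add: poly_to_alg_1 conv_poly_to_alg)

lemma act_poly_to_alg: "N > 0 \<Longrightarrow> act N k (poly_to_alg N A) = poly_to_alg N (monom 1 k * A)"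
  by (simp add: act_def grp_eq_poly_to_alg conv_poly_to_alg)

lemma T_val_eq_poly_to_alg:
  assumes "p > 0"
  shows "T_val p k = poly_to_alg (p\<^sup>2) (cocycle_poly p k :: 'f::field poly)"
proof -
  have N: "p\<^sup>2 > 0"
    using assms by simp
  have norm: "geom_sum 1 p * geom_sum p p = (geom_sum 1 (p\<^sup>2) :: 'f poly)"
    unfolding power2_eq_square by (rule geom_sum_1_mult_geom_sum)
  have T_a: "T_a p = poly_to_alg (p\<^sup>2) (smult (1 / of_nat (p\<^sup>2)) (geom_sum 1 (p\<^sup>2)) :: 'f poly)"
    unfolding T_a_def Phi_a_eq_poly_to_alg Phi_ap_eq_poly_to_alg conv_poly_to_alg[OF N] norm
    by (simp add: fun_eq_iff poly_to_alg_smult divide_inverse mult.commute)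
  have T_val: "T_val p k = (\<lambda>j. \<Sum>l<k. poly_to_alg (p\<^sup>2)
      (monom 1 l * smult (1 / of_nat (p\<^sup>2)) (geom_sum 1 (p\<^sup>2)) :: 'f poly) j)"
    unfolding T_val_def T_a act_poly_to_alg[OF N] ..
  show ?thesis
    unfolding T_val
  proof
    fix j
    have "poly_to_alg (p\<^sup>2) (cocycle_poly p k) j = 1 / of_nat (p\<^sup>2)
        * poly_to_alg (p\<^sup>2) (\<Sum>l<k. monom 1 l * geom_sum 1 (p\<^sup>2) :: 'f poly) j"
      by (simp add: cocycle_poly_def geom_sum_def poly_to_alg_smult sum_distrib_right)
    then show "(\<Sum>l<k. poly_to_alg (p\<^sup>2)
        (monom 1 l * smult (1 / of_nat (p\<^sup>2)) (geom_sum 1 (p\<^sup>2)) :: 'f poly) j)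
        = poly_to_alg (p\<^sup>2) (cocycle_poly p k) j"
      by (simp add: poly_to_alg_sum poly_to_alg_smult sum_distrib_left)
  qed
qed

lemma crys_pow_poly_to_alg:
  assumes "N > 0"
  shows "crys_pow N (k, poly_to_alg N X) n = (n * k mod N, poly_to_alg N (geom_sum k n * X))"
proof (induction n)
  case (Suc n)
  then show ?case
    using assms
    by (simp add: crys_mult_def act_poly_to_alg fun_eq_iff poly_to_alg_add geom_sum_Suc
        mod_add_left_eq mod_add_right_eq algebra_simps)
qed (simp add: fun_eq_iff)

lemma (in p_integral_subring) crys_elem_eq_poly_to_alg:
  assumes "p > 0" "(\<lambda>j. x j - T_val p k j) \<in> X_mod p K i"
  obtains R S where "poly_over K R" "poly_over K S"
    and "x = poly_to_alg (p\<^sup>2) (crys_poly p i k R S)"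
proof -
  obtain r s where r: "r \<in> grp_alg (p\<^sup>2) K" and s: "s \<in> grp_alg (p\<^sup>2) K"
    and x: "(\<lambda>j. x j - T_val p k j) = (\<lambda>j.
        conv (p\<^sup>2) r (conv (p\<^sup>2) (a_minus_1 (p\<^sup>2)) (Phi_ap p)) j
        + conv (p\<^sup>2) s (\<lambda>j. Phi_a p j + cpow (p\<^sup>2) (a_minus_1 (p\<^sup>2)) (i + 1) j) j)"
    using assms(2) unfolding X_mod_def gen_submodule_def by blast
  define R where "R = alg_to_poly (p\<^sup>2) r"
  define S where "S = alg_to_poly (p\<^sup>2) s"
  have r_eq: "r = poly_to_alg (p\<^sup>2) R" and s_eq: "s = poly_to_alg (p\<^sup>2) S"
    using r s unfolding R_def S_def grp_alg_def by (simp_all add: poly_to_alg_alg_to_poly)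
  have "poly_over K R" "poly_over K S"
    using r s unfolding R_def S_def alg_to_poly_def grp_alg_def
    by (auto intro!: poly_over_sum poly_over_monom)
  moreover have "x = poly_to_alg (p\<^sup>2) (crys_poly p i k R S)"
  proof
    fix j
    have N: "p\<^sup>2 > 0"
      using assms(1) by simp
    have "x j = T_val p k j + conv (p\<^sup>2) r (conv (p\<^sup>2) (a_minus_1 (p\<^sup>2)) (Phi_ap p)) j
        + conv (p\<^sup>2) s (\<lambda>j. Phi_a p j + cpow (p\<^sup>2) (a_minus_1 (p\<^sup>2)) (i + 1) j) j"
      using fun_cong[OF x, of j] by (simp add: algebra_simps)
    also have "\<dots> = poly_to_alg (p\<^sup>2) (crys_poly p i k R S) j"
      unfolding r_eq s_eq T_val_eq_poly_to_alg[OF assms(1)] a_minus_1_eq_poly_to_alg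
        Phi_a_eq_poly_to_alg Phi_ap_eq_poly_to_alg cpow_poly_to_alg[OF N] conv_poly_to_alg[OF N]
      by (simp add: crys_poly_def conv_poly_to_alg[OF N] flip: poly_to_alg_add)
    finally show "x j = poly_to_alg (p\<^sup>2) (crys_poly p i k R S) j" .
  qed
  ultimately show thesis
    by (rule that)
qed

lemma (in p_integral_subring) crys_torsion_trivial:
  assumes "prime p" "i \<le> p - 2" "(k, x) \<in> crys (p\<^sup>2) (X_mod p K i) (T_val p)" "n > 0"
    and "crys_pow (p\<^sup>2) (k, x) n = (0, \<lambda>_. 0)"
  shows "k = 0 \<and> x = (\<lambda>_. 0)"
proof -
  have p: "p > 0" "p\<^sup>2 > 0"
    using prime_gt_0_nat[OF assms(1)] by simp_all
  have k: "k < p\<^sup>2" and "(\<lambda>j. x j - T_val p k j) \<in> X_mod p K i"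
    using assms(3) unfolding crys_def by auto
  then obtain R S where RS: "poly_over K R" "poly_over K S"
    and x: "x = poly_to_alg (p\<^sup>2) (crys_poly p i k R S)"
    using crys_elem_eq_poly_to_alg[OF p(1)] by blast
  have dvd: "monom 1 (p\<^sup>2) - 1 dvd geom_sum k n * crys_poly p i k R S"
    using assms(5) unfolding x crys_pow_poly_to_alg[OF p(2)] by (simp add: poly_to_alg_eq_0_iff[OF p(2)])
  have "k = 0"
    by (rule eq_0_if_dvd_geom_sum_mult_crys_poly[OF assms(1,2) k RS assms(4) dvd])
  then have "monom 1 (p\<^sup>2 * 1) - 1 dvd geom_sum (p\<^sup>2) 1 * crys_poly p i k R S"
    using dvd_geom_sum_mult_imp_dvd[of "p\<^sup>2" 1 k n] dvd assms(4) by simp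
  then have "x = (\<lambda>_. 0)"
    unfolding x by (intro poly_to_alg_eq_0_if_dvd p(2)) (simp add: geom_sum_def)
  with \<open>k = 0\<close> show ?thesis ..
qed

section \<open>\<open>\<int>\<^sub>(\<^sub>p\<^sub>)\<close> and \<open>\<int>\<^sub>p\<close>\<close>

lemma Zloc_iff:
  assumes "prime p"
  shows "q \<in> Zloc p \<longleftrightarrow> (\<exists>a b. b > 0 \<and> \<not> int p dvd b \<and> q = of_int a / of_int b)"
proof
  assume "q \<in> Zloc p"
  obtain a b where ab: "quotient_of q = (a, b)"
    by (cases "quotient_of q")
  then show "\<exists>a b. b > 0 \<and> \<not> int p dvd b \<and> q = of_int a / of_int b"
    using \<open>q \<in> Zloc p\<close> quotient_of_denom_pos[OF ab] quotient_of_div[OF ab]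
    unfolding Zloc_def by auto
next
  assume "\<exists>a b. b > 0 \<and> \<not> int p dvd b \<and> q = of_int a / of_int b"
  then obtain a b where b: "b > 0" "\<not> int p dvd b" and q: "q = of_int a / of_int b"
    by blast
  obtain n d where nd: "quotient_of q = (n, d)"
    by (cases "quotient_of q")
  have "of_int n / of_int d = (of_int a / of_int b :: rat)"
    using quotient_of_div[OF nd] q by simp
  then have "of_int (n * b) = (of_int (a * d) :: rat)"
    using b quotient_of_denom_pos[OF nd] by (simp add: field_simps)
  then have "n * b = a * d"
    by (simp only: of_int_eq_iff)
  then have "d dvd b"
    using quotient_of_coprime[OF nd]
    by (metis coprime_commute coprime_dvd_mult_right_iff dvd_triv_right)
  then show "q \<in> Zloc p"
    using b(2) nd dvd_trans unfolding Zloc_def by auto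
qed

lemma one_in_Zloc:
  assumes "prime p"
  shows "1 \<in> Zloc p"
  unfolding Zloc_iff[OF assms] using assms by (intro exI[of _ 1]) (auto simp: prime_gt_1_nat)

lemma Zloc_closed:
  assumes "prime p" "x \<in> Zloc p" "y \<in> Zloc p"
  shows "x + y \<in> Zloc p" "x * y \<in> Zloc p" "- x \<in> Zloc p"
proof -
  obtain a b where ab: "b > 0" "\<not> int p dvd b" "x = of_int a / of_int b"
    using assms(2) unfolding Zloc_iff[OF assms(1)] by blast
  obtain c d where cd: "d > 0" "\<not> int p dvd d" "y = of_int c / of_int d"
    using assms(3) unfolding Zloc_iff[OF assms(1)] by blast
  have "b * d > 0" "\<not> int p dvd b * d"
    using ab cd assms(1) by (auto simp: prime_dvd_mult_iff)
  moreover have "x + y = of_int (a * d + c * b) / of_int (b * d)" "x * y = of_int (a * c) / of_int (b * d)"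
    using ab cd by (simp_all add: field_simps)
  moreover have "- x = of_int (- a) / of_int b"
    using ab by simp
  ultimately show "x + y \<in> Zloc p" "x * y \<in> Zloc p" "- x \<in> Zloc p"
    unfolding Zloc_iff[OF assms(1)] using ab by blast+
qed

lemma p_dvd_if_of_nat_eq_mult_Zloc:
  assumes "prime p" "q \<in> Zloc p" "of_nat c = of_nat p * q"
  shows "p dvd c"
proof -
  obtain a b where ab: "b > 0" "\<not> int p dvd b" "q = of_int a / of_int b"
    using assms(2) unfolding Zloc_iff[OF assms(1)] by blast
  then have "of_int (int c * b) = (of_int (int p * a) :: rat)"
    using assms(3) by (simp add: field_simps)
  then have "int p dvd int c * b"
    by (metis of_int_eq_iff dvd_triv_left)
  then show ?thesis
    using ab(2) assms(1) by (simp add: prime_dvd_mult_iff)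
qed

lemma p_integral_subring_Zloc:
  assumes "prime p"
  shows "p_integral_subring p (of_rat ` Zloc p :: 'f::field_char_0 set)"
proof
  show "1 \<in> (of_rat ` Zloc p :: 'f set)"
    using one_in_Zloc[OF assms] by (metis image_eqI of_rat_1)
next
  fix a b :: 'f
  assume "a \<in> of_rat ` Zloc p" "b \<in> of_rat ` Zloc p"
  then show "a + b \<in> of_rat ` Zloc p" "a * b \<in> of_rat ` Zloc p"
    by (auto simp flip: of_rat_add of_rat_mult intro!: imageI Zloc_closed[OF assms])
next
  fix a :: 'f
  assume "a \<in> of_rat ` Zloc p"
  then show "- a \<in> of_rat ` Zloc p"
    by (auto simp flip: of_rat_minus intro!: imageI Zloc_closed[OF assms])
next
  fix \<kappa> :: 'f and c
  assume "\<kappa> \<in> of_rat ` Zloc p" "of_nat c = of_nat p * \<kappa>"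
  then obtain q where q: "q \<in> Zloc p" "of_nat c = of_nat p * (of_rat q :: 'f)"
    by blast
  then have "(of_rat (of_nat c) :: 'f) = of_rat (of_nat p * q)"
    by (simp add: of_rat_mult)
  then show "p dvd c"
    using p_dvd_if_of_nat_eq_mult_Zloc[OF assms q(1)] by (simp only: of_rat_eq_iff)
qed

lemma padic_ints_closed:
  assumes "p > 0" "x \<in> padic_ints p" "y \<in> padic_ints p"
    and f: "\<And>a b m. f (a mod m) (b mod m) mod m = f a b mod (m::int)"
  shows "(\<lambda>n. f (x n) (y n) mod int p ^ n) \<in> padic_ints p"
  unfolding padic_ints_def
proof (intro CollectI allI conjI)
  fix n
  have "int p ^ n > 0"
    using assms(1) by simp
  then show "0 \<le> f (x n) (y n) mod int p ^ n" "f (x n) (y n) mod int p ^ n < int p ^ n"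
    by simp_all
  have "f (x (Suc n)) (y (Suc n)) mod int p ^ Suc n mod int p ^ n
      = f (x (Suc n) mod int p ^ n) (y (Suc n) mod int p ^ n) mod int p ^ n"
    by (simp add: mod_mod_cancel le_imp_power_dvd f)
  also have "\<dots> = f (x n) (y n) mod int p ^ n"
    using assms(2,3) unfolding padic_ints_def by (metis (mono_tags, lifting) mem_Collect_eq)
  finally show "f (x n) (y n) mod int p ^ n = f (x (Suc n)) (y (Suc n)) mod int p ^ Suc n mod int p ^ n"
    by simp
qed

lemma padd_mem: "p > 0 \<Longrightarrow> x \<in> padic_ints p \<Longrightarrow> y \<in> padic_ints p \<Longrightarrow> padd p x y \<in> padic_ints p"
  unfolding padd_def by (intro padic_ints_closed mod_add_eq)

lemma pmult_mem: "p > 0 \<Longrightarrow> x \<in> padic_ints p \<Longrightarrow> y \<in> padic_ints p \<Longrightarrow> pmult p x y \<in> padic_ints p"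
  unfolding pmult_def by (intro padic_ints_closed mod_mult_eq)

definition padic_of_nat :: "nat \<Rightarrow> nat \<Rightarrow> nat \<Rightarrow> int" where
  "padic_of_nat p c = (\<lambda>n. int c mod int p ^ n)"

lemma padic_of_nat_mem: "p > 0 \<Longrightarrow> padic_of_nat p c \<in> padic_ints p"
  by (simp add: padic_ints_def padic_of_nat_def mod_mod_cancel le_imp_power_dvd)

lemma padic_embedding_of_nat:
  assumes "padic_embedding p \<phi>" "p > 0"
  shows "\<phi> (padic_of_nat p c) = of_nat c"
proof (induction c)
  case 0
  have "padd p (padic_of_nat p 0) (padic_of_nat p 0) = padic_of_nat p 0"
    by (simp add: padd_def padic_of_nat_def)
  moreover have "\<phi> (padd p (padic_of_nat p 0) (padic_of_nat p 0))
      = \<phi> (padic_of_nat p 0) + \<phi> (padic_of_nat p 0)"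
    using assms(1) padic_of_nat_mem[OF assms(2), of 0] unfolding padic_embedding_def by blast
  ultimately have "\<phi> (padic_of_nat p 0) + \<phi> (padic_of_nat p 0) = \<phi> (padic_of_nat p 0)"
    by simp
  then show ?case
    by (simp only: add_cancel_left_right of_nat_0)
next
  case (Suc c)
  have pone: "pone p = padic_of_nat p 1"
    by (simp add: pone_def padic_of_nat_def)
  have "padic_of_nat p (Suc c) = padd p (padic_of_nat p c) (pone p)"
    by (simp add: fun_eq_iff padic_of_nat_def padd_def pone_def mod_add_eq add.commute[of 1])
  then have "\<phi> (padic_of_nat p (Suc c)) = \<phi> (padic_of_nat p c) + \<phi> (pone p)"
    using assms padic_of_nat_mem[OF assms(2)] unfolding padic_embedding_def pone by simp
  then show ?case
    using assms(1) Suc unfolding padic_embedding_def by simp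
qed

lemma padic_embedding_uminus:
  assumes "padic_embedding p \<phi>" "p > 0" "x \<in> padic_ints p"
  shows "(\<lambda>n. (- x n) mod int p ^ n) \<in> padic_ints p" "\<phi> (\<lambda>n. (- x n) mod int p ^ n) = - \<phi> x"
proof -
  show neg: "(\<lambda>n. (- x n) mod int p ^ n) \<in> padic_ints p"
    using padic_ints_closed[OF assms(2,3,3), of "\<lambda>a b. - a"] by (simp add: mod_minus_eq)
  have "\<phi> x + \<phi> (\<lambda>n. (- x n) mod int p ^ n) = \<phi> (padd p x (\<lambda>n. (- x n) mod int p ^ n))"
    using assms(1,3) neg unfolding padic_embedding_def by simp
  also have "padd p x (\<lambda>n. (- x n) mod int p ^ n) = padic_of_nat p 0"
    by (simp add: fun_eq_iff padd_def padic_of_nat_def mod_add_right_eq)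
  finally have "\<phi> x + \<phi> (\<lambda>n. (- x n) mod int p ^ n) = 0"
    using padic_embedding_of_nat[OF assms(1,2), of 0] by simp
  then show "\<phi> (\<lambda>n. (- x n) mod int p ^ n) = - \<phi> x"
    by (simp add: eq_neg_iff_add_eq_0 add.commute)
qed

lemma padic_embedding_p_dvd:
  assumes "padic_embedding p \<phi>" "p > 0" "z \<in> padic_ints p" "of_nat c = of_nat p * \<phi> z"
  shows "p dvd c"
proof -
  have "\<phi> (padic_of_nat p c) = \<phi> (pmult p (padic_of_nat p p) z)"
    using assms padic_of_nat_mem[OF assms(2)] padic_embedding_of_nat[OF assms(1,2)]
    unfolding padic_embedding_def by simp
  then have "padic_of_nat p c = pmult p (padic_of_nat p p) z"
    using assms(1) pmult_mem[OF assms(2) padic_of_nat_mem[OF assms(2)] assms(3)]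
      padic_of_nat_mem[OF assms(2)]
    unfolding padic_embedding_def by (meson inj_onD)
  then have "padic_of_nat p c 1 = pmult p (padic_of_nat p p) z 1"
    by simp
  then show "p dvd c"
    by (simp add: padic_of_nat_def pmult_def flip: int_dvd_int_iff dvd_eq_mod_eq_0)
qed

lemma p_integral_subring_padic:
  assumes "prime p" "padic_embedding p \<phi>"
  shows "p_integral_subring p (\<phi> ` padic_ints p :: 'f::field_char_0 set)"
proof -
  have p: "p > 0"
    using assms(1) prime_gt_0_nat by blast
  have hom: "\<And>x y. x \<in> padic_ints p \<Longrightarrow> y \<in> padic_ints p \<Longrightarrow>
      \<phi> (padd p x y) = \<phi> x + \<phi> y \<and> \<phi> (pmult p x y) = \<phi> x * \<phi> y"
    using assms(2) unfolding padic_embedding_def by auto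
  show ?thesis
  proof
    show "1 \<in> \<phi> ` padic_ints p"
      using assms(2) padic_of_nat_mem[OF p, of 1]
      by (force simp: padic_embedding_def pone_def padic_of_nat_def)
  next
    fix a b :: 'f
    assume "a \<in> \<phi> ` padic_ints p" "b \<in> \<phi> ` padic_ints p"
    then obtain x y where xy: "x \<in> padic_ints p" "y \<in> padic_ints p" and ab: "a = \<phi> x" "b = \<phi> y"
      by blast
    show "a + b \<in> \<phi> ` padic_ints p" "a * b \<in> \<phi> ` padic_ints p"
      unfolding ab using hom[OF xy] padd_mem[OF p xy] pmult_mem[OF p xy] by (metis imageI)+
  next
    fix a :: 'f
    assume "a \<in> \<phi> ` padic_ints p"
    then obtain x where x: "x \<in> padic_ints p" "a = \<phi> x"
      by blast
    then show "- a \<in> \<phi> ` padic_ints p"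
      using padic_embedding_uminus[OF assms(2) p x(1)] by (metis imageI)
  next
    fix \<kappa> :: 'f and c
    assume "\<kappa> \<in> \<phi> ` padic_ints p" "of_nat c = of_nat p * \<kappa>"
    then show "p dvd c"
      using padic_embedding_p_dvd[OF assms(2) p] by blast
  qed
qed

theorem lemma8:
  fixes p :: nat and i :: nat and K :: "'f::field_char_0 set"
  assumes "prime p"
    and "K = of_rat ` Zloc p \<or> (\<exists>\<phi>. padic_embedding p \<phi> \<and> K = \<phi> ` padic_ints p)"
    and "i \<le> p - 2"
  shows "torsion_free_crys (p^2) (crys (p^2) (X_mod p K i) (T_val p))"
proof -
  interpret p_integral_subring p K
    using assms(2) p_integral_subring_Zloc[OF assms(1)] p_integral_subring_padic[OF assms(1)] by blast
  show ?thesis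
    unfolding torsion_free_crys_def
  proof (intro ballI allI impI)
    fix e and n :: nat
    assume "e \<in> crys (p\<^sup>2) (X_mod p K i) (T_val p)" "0 < n" "crys_pow (p\<^sup>2) e n = (0, \<lambda>_. 0)"
    then show "e = (0, \<lambda>_. 0)"
      using crys_torsion_trivial[OF assms(1,3)] by (cases e) simp
  qed
qed

end
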